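(* Let $\mathcal{X}_k \in \{\mathcal{E}_k, \mathcal{F}_k\}$ for $1 \leq k \leq n$. For any $\lambda \in R$ and $1< i,j \leq n$, \[1 + \lambda \mathcal{X}_i\mathcal{X}_j = [1+ \lambda \mathcal{X}_i\mathcal{X}_1,\ 1 + \mathcal{X}_1\mathcal{X}_j].\]
   Context: Let $R$ be a commutative ring. For $v=(a_1,\dots,a_n), w=(b_1,\dots,b_n)\in R^n$ the Suslin matrix $\mathcal{S}_{n-1}(v,w)$ is defined recursively: $\mathcal{S}_1(v,w)=\begin{pmatrix} a_1 & a_2\\ -b_2 & b_1\end{pmatrix}$, $\overline{\mathcal{S}_1(v,w)}=\begin{pmatrix} b_1 & -a_2\\ b_2 & a_1\end{pmatrix}$, and with $v=(a_1,v')$, $w=(b_1,w')$, $\mathcal{S}_{n-1}(v,w)=\begin{pmatrix} a_1 & \mathcal{S}_{n-2}(v',w')\\ -\overline{\mathcal{S}_{n-2}(v',w')} & b_1\end{pmatrix}$, $\overline{\mathcal{S}_{n-1}(v,w)}=\begin{pmatrix} b_1 & -\mathcal{S}_{n-2}(v',w')\\ \overline{\mathcal{S}_{n-2}(v',w')} & a_1\end{pmatrix}$. Set $\mathcal{E}_i = \mathcal{S}_{n-1}(e_i,0)$, $\mathcal{F}_i = \mathcal{S}_{n-1}(0,f_i)$ for standard basis vectors $e_i$, $f_i$. The commutator is $[a,b]=aba^{-1}b^{-1}$. *)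

theory Defs
  imports "Jordan_Normal_Form.Matrix"
begin

text \<open>Vectors v = (a_1,...,a_n) in R^n are represented as functions nat => 'a,
  with a_k = v k for 1 <= k <= n (entries outside 1..n are ignored).
  suslin_pair m v w = (S_m(v,w), conjugate of S_m(v,w)), a pair of 2^m x 2^m matrices,
  depending only on v 1 .. v (m+1), w 1 .. w (m+1).
  The recursion follows the paper literally: S_1 is given explicitly, and
  S_m(v,w) = [[a_1 I, S_{m-1}(v',w')], [-conj S_{m-1}(v',w'), b_1 I]] with v' = (a_2,...),
  where the scalar a_1 stands for a_1 times the identity of size 2^(m-1).
  The case m = 0 is never used in the statement (it is a 1x1 placeholder).\<close>

fun suslin_pair :: "nat \<Rightarrow> (nat \<Rightarrow> 'a::comm_ring_1) \<Rightarrow> (nat \<Rightarrow> 'a) \<Rightarrow> 'a mat \<times> 'a mat" where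
  "suslin_pair 0 v w = (mat 1 1 (\<lambda>_. v 1), mat 1 1 (\<lambda>_. w 1))"
| "suslin_pair (Suc 0) v w =
     (mat_of_rows_list 2 [[v 1, v 2], [- w 2, w 1]],
      mat_of_rows_list 2 [[w 1, - v 2], [w 2, v 1]])"
| "suslin_pair (Suc (Suc m)) v w =
     (let v' = (\<lambda>k. v (Suc k)); w' = (\<lambda>k. w (Suc k));
          P = suslin_pair (Suc m) v' w'; S = fst P; Sb = snd P;
          d = 2 ^ Suc m
      in (four_block_mat (v 1 \<cdot>\<^sub>m 1\<^sub>m d) S (- Sb) (w 1 \<cdot>\<^sub>m 1\<^sub>m d),
          four_block_mat (w 1 \<cdot>\<^sub>m 1\<^sub>m d) (- S) Sb (v 1 \<cdot>\<^sub>m 1\<^sub>m d)))"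

definition suslin :: "nat \<Rightarrow> (nat \<Rightarrow> 'a::comm_ring_1) \<Rightarrow> (nat \<Rightarrow> 'a) \<Rightarrow> 'a mat" where
  "suslin m v w = fst (suslin_pair m v w)"

definition suslin_bar :: "nat \<Rightarrow> (nat \<Rightarrow> 'a::comm_ring_1) \<Rightarrow> (nat \<Rightarrow> 'a) \<Rightarrow> 'a mat" where
  "suslin_bar m v w = snd (suslin_pair m v w)"

definition std_basis :: "nat \<Rightarrow> nat \<Rightarrow> 'a::comm_ring_1" where
  "std_basis i = (\<lambda>k. if k = i then 1 else 0)"

definition suslinE :: "nat \<Rightarrow> nat \<Rightarrow> 'a::comm_ring_1 mat" where
  "suslinE n i = suslin (n - 1) (std_basis i) (\<lambda>_. 0)"

definition suslinF :: "nat \<Rightarrow> nat \<Rightarrow> 'a::comm_ring_1 mat" where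
  "suslinF n i = suslin (n - 1) (\<lambda>_. 0) (std_basis i)"

text \<open>Two-sided inverse of a square matrix (meaningful when it exists).\<close>
definition mat_inv :: "'a::comm_ring_1 mat \<Rightarrow> 'a mat" where
  "mat_inv A = (SOME B. B \<in> carrier_mat (dim_row A) (dim_row A) \<and>
      A * B = 1\<^sub>m (dim_row A) \<and> B * A = 1\<^sub>m (dim_row A))"

definition mat_comm :: "'a::comm_ring_1 mat \<Rightarrow> 'a mat \<Rightarrow> 'a mat" where
  "mat_comm A B = A * B * mat_inv A * mat_inv B"

end

theory Submission
  imports Defs
begin

(* Write e = X 1, x = X i and y = X j, all of size 2^(n-1). In block form e is diag(1,0) or
   diag(0,1), while for k > 1 the matrix X k is block off-diagonal, [[0, T], [-bar T, 0]].
   Hence e is idempotent and e x + x e = x, e y + y e = y. The classical identity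
   S(v,w) * bar S(v,w) = <v,w> for Suslin matrices, together with bar S = -S for the
   off-diagonal ones, gives x^2 = y^2 = 0, and by linearity of S also (x + y)^2 = 0, so x and y
   anticommute. In any ring these relations make a = c x e and b = e y satisfy
   a^2 = b^2 = a b a = b a b = 0 and a b - b a = c x y, and for such a, b one has
   [1 + a, 1 + b] = (1 + a)(1 + b)(1 - a)(1 - b) = 1 + a b - b a. *)

context ring
begin

(* The normaliser behind the algebra method omits right identity in non-commutative rings. *)
declare r_one [algebra ring "zero R" "add R" "a_inv R" "a_minus R" "one R" "mult R"]

lemma one_plus_square_zero_Units:
  assumes a: "a \<in> carrier R" and "a \<otimes> a = \<zero>"
  shows "\<one> \<oplus> a \<in> Units R" and "inv (\<one> \<oplus> a) = \<one> \<ominus> a"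
proof -
  have "(\<one> \<oplus> a) \<otimes> (\<one> \<ominus> a) = \<one>" "(\<one> \<ominus> a) \<otimes> (\<one> \<oplus> a) = \<one>"
    using assms by algebra+
  with a show "\<one> \<oplus> a \<in> Units R" "inv (\<one> \<oplus> a) = \<one> \<ominus> a"
    by (auto simp: Units_def intro: inv_char)
qed

lemma commutator_one_plus_square_zero:
  assumes a: "a \<in> carrier R" and b: "b \<in> carrier R"
    and "a \<otimes> a = \<zero>" "b \<otimes> b = \<zero>" "a \<otimes> b \<otimes> a = \<zero>" "b \<otimes> a \<otimes> b = \<zero>"
  shows "(\<one> \<oplus> a) \<otimes> (\<one> \<oplus> b) \<otimes> inv (\<one> \<oplus> a) \<otimes> inv (\<one> \<oplus> b) = \<one> \<oplus> a \<otimes> b \<ominus> b \<otimes> a"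
proof -
  have zero: "a \<otimes> (a \<otimes> z) = \<zero>" "b \<otimes> (b \<otimes> z) = \<zero>"
    "a \<otimes> (b \<otimes> (a \<otimes> z)) = \<zero>" "b \<otimes> (a \<otimes> (b \<otimes> z)) = \<zero>"
    if "z \<in> carrier R" for z
    using assms that by (simp_all flip: m_assoc)
  show ?thesis
    using a b assms(3-6) zero by (simp add: one_plus_square_zero_Units(2)) algebra
qed

lemma commutator_one_plus_odd:
  assumes e: "e \<in> carrier R" and x: "x \<in> carrier R" and y: "y \<in> carrier R"
    and idem: "e \<otimes> e = e" and odd: "e \<otimes> x \<oplus> x \<otimes> e = x" "e \<otimes> y \<oplus> y \<otimes> e = y"
    and square: "x \<otimes> x = \<zero>" "y \<otimes> y = \<zero>" and anti: "x \<otimes> y \<oplus> y \<otimes> x = \<zero>"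
  shows "\<one> \<oplus> x \<otimes> e \<in> Units R" and "\<one> \<oplus> e \<otimes> y \<in> Units R"
    and "(\<one> \<oplus> x \<otimes> e) \<otimes> (\<one> \<oplus> e \<otimes> y) \<otimes> inv (\<one> \<oplus> x \<otimes> e) \<otimes> inv (\<one> \<oplus> e \<otimes> y) = \<one> \<oplus> x \<otimes> y"
proof -
  have "e \<otimes> x = (e \<otimes> x \<oplus> x \<otimes> e) \<ominus> x \<otimes> e" "e \<otimes> y = (e \<otimes> y \<oplus> y \<otimes> e) \<ominus> y \<otimes> e"
    "y \<otimes> x = \<ominus> (x \<otimes> y) \<oplus> (x \<otimes> y \<oplus> y \<otimes> x)"
    using e x y by algebra+
  then have ex: "e \<otimes> x = x \<ominus> x \<otimes> e" and ey: "e \<otimes> y = y \<ominus> y \<otimes> e" and yx: "y \<otimes> x = \<ominus> (x \<otimes> y)"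
    using x y by (simp_all only: odd anti r_zero m_closed a_inv_closed)
  \<comment> \<open>Oriented forms of the hypotheses, also inside products: they move \<open>e\<close> to the right
    and \<open>x\<close> in front of \<open>y\<close>, so that the normal forms of \<open>algebra\<close> decide the identities below.\<close>
  have rules: "e \<otimes> (e \<otimes> z) = e \<otimes> z" "e \<otimes> (x \<otimes> z) = (x \<ominus> x \<otimes> e) \<otimes> z"
    "e \<otimes> (y \<otimes> z) = (y \<ominus> y \<otimes> e) \<otimes> z" "y \<otimes> (x \<otimes> z) = (\<ominus> (x \<otimes> y)) \<otimes> z"
    "x \<otimes> (x \<otimes> z) = \<zero>" "y \<otimes> (y \<otimes> z) = \<zero>"
    if "z \<in> carrier R" for z
    using that e x y idem square ex ey yx by (simp_all flip: m_assoc)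
  have "x \<otimes> e \<otimes> (x \<otimes> e) = \<zero>" "e \<otimes> y \<otimes> (e \<otimes> y) = \<zero>"
    "x \<otimes> e \<otimes> (e \<otimes> y) \<otimes> (x \<otimes> e) = \<zero>" "e \<otimes> y \<otimes> (x \<otimes> e) \<otimes> (e \<otimes> y) = \<zero>"
    "\<one> \<oplus> x \<otimes> e \<otimes> (e \<otimes> y) \<ominus> e \<otimes> y \<otimes> (x \<otimes> e) = \<one> \<oplus> x \<otimes> y"
    using e x y idem square ex ey yx rules by algebra+
  with e x y show "\<one> \<oplus> x \<otimes> e \<in> Units R" "\<one> \<oplus> e \<otimes> y \<in> Units R"
    and "(\<one> \<oplus> x \<otimes> e) \<otimes> (\<one> \<oplus> e \<otimes> y) \<otimes> inv (\<one> \<oplus> x \<otimes> e) \<otimes> inv (\<one> \<oplus> e \<otimes> y) = \<one> \<oplus> x \<otimes> y"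
    using commutator_one_plus_square_zero[of "x \<otimes> e" "e \<otimes> y"] one_plus_square_zero_Units(1) by simp_all
qed

end

lemma mat_inv_unique:
  fixes A B :: "'a::comm_ring_1 mat"
  assumes A: "A \<in> carrier_mat n n" and B: "B \<in> carrier_mat n n"
    and "A * B = 1\<^sub>m n" and "B * A = 1\<^sub>m n"
  shows "mat_inv A = B"
proof -
  have "\<exists>B. B \<in> carrier_mat (dim_row A) (dim_row A) \<and> A * B = 1\<^sub>m (dim_row A) \<and> B * A = 1\<^sub>m (dim_row A)"
    using assms by auto
  from someI_ex[OF this] have C: "mat_inv A \<in> carrier_mat n n" "mat_inv A * A = 1\<^sub>m n"
    unfolding mat_inv_def using A by auto
  have "B = (mat_inv A * A) * B" using C B by simp
  also have "\<dots> = mat_inv A * (A * B)" using assoc_mult_mat[OF C(1) A B] .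
  also have "\<dots> = mat_inv A" using C assms(3) by simp
  finally show ?thesis by simp
qed

lemma mat_inv_eq_Units_inv:
  assumes "A \<in> Units (ring_mat TYPE('a::comm_ring_1) n b)"
  shows "mat_inv A = inv\<^bsub>ring_mat TYPE('a) n b\<^esub> A"
proof -
  interpret R: ring "ring_mat TYPE('a) n b" by (rule ring_mat)
  show ?thesis
    using assms R.Units_closed R.Units_inv_closed R.Units_l_inv R.Units_r_inv
    by (intro mat_inv_unique) (auto simp: ring_mat_simps)
qed

lemma mat_comm_one_plus_odd:
  fixes e x y :: "'a::comm_ring_1 mat"
  assumes carrier: "e \<in> carrier_mat n n" "x \<in> carrier_mat n n" "y \<in> carrier_mat n n"
    and idem: "e * e = e" and odd: "e * x + x * e = x" "e * y + y * e = y"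
    and square: "x * x = 0\<^sub>m n n" "y * y = 0\<^sub>m n n" and anti: "x * y + y * x = 0\<^sub>m n n"
  shows "1\<^sub>m n + c \<cdot>\<^sub>m (x * y) = mat_comm (1\<^sub>m n + c \<cdot>\<^sub>m (x * e)) (1\<^sub>m n + e * y)"
proof -
  interpret R: ring "ring_mat TYPE('a) n ()" by (rule ring_mat)
  let ?x = "c \<cdot>\<^sub>m x"
  have "e * ?x + ?x * e = c \<cdot>\<^sub>m (e * x + x * e)" "?x * ?x = c \<cdot>\<^sub>m (c \<cdot>\<^sub>m (x * x))"
    "?x * y + y * ?x = c \<cdot>\<^sub>m (x * y + y * x)"
    using carrier
    by (simp_all add: mult_smult_assoc_mat[of x n n ?x n] mult_smult_assoc_mat mult_smult_distrib
        add_smult_distrib_left_mat[of _ n n])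
  with odd square anti have x': "e * ?x + ?x * e = ?x" "?x * ?x = 0\<^sub>m n n" "?x * y + y * ?x = 0\<^sub>m n n"
    by simp_all
  have units: "1\<^sub>m n + ?x * e \<in> Units (ring_mat TYPE('a) n ())" "1\<^sub>m n + e * y \<in> Units (ring_mat TYPE('a) n ())"
    and comm: "(1\<^sub>m n + ?x * e) * (1\<^sub>m n + e * y) * inv\<^bsub>ring_mat TYPE('a) n ()\<^esub> (1\<^sub>m n + ?x * e)
       * inv\<^bsub>ring_mat TYPE('a) n ()\<^esub> (1\<^sub>m n + e * y) = 1\<^sub>m n + ?x * y"
    using R.commutator_one_plus_odd[of e ?x y] carrier x' idem odd(2) square(2)
    by (simp_all add: ring_mat_simps)
  have "c \<cdot>\<^sub>m (x * e) = ?x * e" "c \<cdot>\<^sub>m (x * y) = ?x * y"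
    using carrier by (simp_all add: mult_smult_assoc_mat)
  with comm show ?thesis
    unfolding mat_comm_def
    by (simp add: mat_inv_eq_Units_inv[OF units(1)] mat_inv_eq_Units_inv[OF units(2)])
qed

lemma anticommute_of_square_zero_mat:
  fixes x y :: "'a::comm_ring_1 mat"
  assumes x: "x \<in> carrier_mat n n" and y: "y \<in> carrier_mat n n"
    and "x * x = 0\<^sub>m n n" "y * y = 0\<^sub>m n n" "(x + y) * (x + y) = 0\<^sub>m n n"
  shows "x * y + y * x = 0\<^sub>m n n"
proof -
  have "(x + y) * (x + y) = x * x + y * x + (x * y + y * y)"
    using x y
    by (simp add: mult_add_distrib_mat[of "x + y" n n x n y] add_mult_distrib_mat[of x n n y x n]
        add_mult_distrib_mat[of x n n y y n])
  with assms show ?thesis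
    using x y by (simp add: comm_add_mat[of "y * x" n n])
qed

lemma zero_smult_mat [simp]: "(0::'a::comm_ring_1) \<cdot>\<^sub>m A = 0\<^sub>m (dim_row A) (dim_col A)"
  by (intro eq_matI) auto

lemma one_smult_mat [simp]: "(1::'a::comm_ring_1) \<cdot>\<^sub>m A = A"
  by (intro eq_matI) auto

lemma uminus_zero_mat [simp]: "- 0\<^sub>m nr nc = (0\<^sub>m nr nc :: 'a::ab_group_add mat)"
  by (intro eq_matI) auto

lemma uminus_add_distrib_mat:
  fixes A B :: "'a::ab_group_add mat"
  assumes "A \<in> carrier_mat nr nc" "B \<in> carrier_mat nr nc"
  shows "- (A + B) = - A + - B"
  using assms by (intro eq_matI) auto

lemma smult_one_mult_mat [simp]:
  "dim_row A = n \<Longrightarrow> (a \<cdot>\<^sub>m 1\<^sub>m n) * A = a \<cdot>\<^sub>m (A :: 'a::comm_ring_1 mat)"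
  by (intro eq_matI) auto

lemma mult_smult_one_mat [simp]:
  "dim_col A = n \<Longrightarrow> A * (a \<cdot>\<^sub>m 1\<^sub>m n) = a \<cdot>\<^sub>m (A :: 'a::comm_ring_1 mat)"
  by (intro eq_matI) (auto simp: mult.commute)

lemma smult_one_four_block_mat:
  "a \<cdot>\<^sub>m 1\<^sub>m (d + d) = four_block_mat (a \<cdot>\<^sub>m 1\<^sub>m d) (0\<^sub>m d d) (0\<^sub>m d d) (a \<cdot>\<^sub>m 1\<^sub>m d :: 'a::comm_ring_1 mat)"
  by (intro eq_matI) auto

lemma four_block_scalar_mult:
  fixes T T' :: "'a::comm_ring_1 mat"
  assumes T: "T \<in> carrier_mat d d" and T': "T' \<in> carrier_mat d d"
    and "T * T' = q \<cdot>\<^sub>m 1\<^sub>m d" and "T' * T = q \<cdot>\<^sub>m 1\<^sub>m d"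
  shows "four_block_mat (a \<cdot>\<^sub>m 1\<^sub>m d) T (- T') (b \<cdot>\<^sub>m 1\<^sub>m d) * four_block_mat (b \<cdot>\<^sub>m 1\<^sub>m d) (- T) T' (a \<cdot>\<^sub>m 1\<^sub>m d)
    = (a * b + q) \<cdot>\<^sub>m 1\<^sub>m (d + d)"
  unfolding smult_one_four_block_mat using assms
  by (simp add: mult_four_block_mat[where ?nr1.0 = d and ?n1.0 = d and ?n2.0 = d and ?nr2.0 = d and ?nc1.0 = d and ?nc2.0 = d])
    (intro cong_four_block_mat eq_matI; simp add: distrib_right)

lemma four_block_diag_mult:
  "four_block_mat (a \<cdot>\<^sub>m 1\<^sub>m d) (0\<^sub>m d d) (0\<^sub>m d d) (b \<cdot>\<^sub>m 1\<^sub>m d)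
     * four_block_mat (a' \<cdot>\<^sub>m 1\<^sub>m d) (0\<^sub>m d d) (0\<^sub>m d d) (b' \<cdot>\<^sub>m 1\<^sub>m d)
   = four_block_mat ((a * a') \<cdot>\<^sub>m 1\<^sub>m d) (0\<^sub>m d d) (0\<^sub>m d d) ((b * b') \<cdot>\<^sub>m 1\<^sub>m (d :: nat) :: 'a::comm_ring_1 mat)"
  by (simp add: mult_four_block_mat[where ?nr1.0 = d and ?n1.0 = d and ?n2.0 = d and ?nr2.0 = d and ?nc1.0 = d and ?nc2.0 = d])
    (intro cong_four_block_mat eq_matI; simp)

lemma four_block_diag_anticommute:
  fixes B C :: "'a::comm_ring_1 mat"
  assumes "B \<in> carrier_mat d d" and "C \<in> carrier_mat d d"
  shows "four_block_mat (a \<cdot>\<^sub>m 1\<^sub>m d) (0\<^sub>m d d) (0\<^sub>m d d) (b \<cdot>\<^sub>m 1\<^sub>m d) * four_block_mat (0\<^sub>m d d) B C (0\<^sub>m d d)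
    + four_block_mat (0\<^sub>m d d) B C (0\<^sub>m d d) * four_block_mat (a \<cdot>\<^sub>m 1\<^sub>m d) (0\<^sub>m d d) (0\<^sub>m d d) (b \<cdot>\<^sub>m 1\<^sub>m d)
    = (a + b) \<cdot>\<^sub>m four_block_mat (0\<^sub>m d d) B C (0\<^sub>m d d)"
  using assms
  by (simp add: mult_four_block_mat[where ?nr1.0 = d and ?n1.0 = d and ?n2.0 = d and ?nr2.0 = d and ?nc1.0 = d and ?nc2.0 = d]
      add_four_block_mat[where ?nr1.0 = d and ?nc1.0 = d and ?nr2.0 = d and ?nc2.0 = d]
      smult_four_block_mat[where ?nr1.0 = d and ?nc1.0 = d and ?nr2.0 = d and ?nc2.0 = d])
    (intro cong_four_block_mat eq_matI; simp add: distrib_right)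

lemma suslin_0:
  "suslin 0 v w = mat 1 1 (\<lambda>_. v 1)" "suslin_bar 0 v w = mat 1 1 (\<lambda>_. w 1)"
  by (simp_all add: suslin_def suslin_bar_def)

(* The explicit S_1 of the definition is the recursion applied to the 1 x 1 matrices S_0(v,w) = (v 1),
   so the recursion holds from m = 0 on. *)
lemma suslin_Suc:
  "suslin (Suc m) v w = four_block_mat (v 1 \<cdot>\<^sub>m 1\<^sub>m (2 ^ m))
     (suslin m (\<lambda>k. v (Suc k)) (\<lambda>k. w (Suc k))) (- suslin_bar m (\<lambda>k. v (Suc k)) (\<lambda>k. w (Suc k)))
     (w 1 \<cdot>\<^sub>m 1\<^sub>m (2 ^ m))"
  "suslin_bar (Suc m) v w = four_block_mat (w 1 \<cdot>\<^sub>m 1\<^sub>m (2 ^ m))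
     (- suslin m (\<lambda>k. v (Suc k)) (\<lambda>k. w (Suc k))) (suslin_bar m (\<lambda>k. v (Suc k)) (\<lambda>k. w (Suc k)))
     (v 1 \<cdot>\<^sub>m 1\<^sub>m (2 ^ m))"
  by (cases m, auto intro!: eq_matI simp: suslin_def suslin_bar_def mat_of_rows_list_def less_Suc_eq
      numeral_2_eq_2, simp_all add: suslin_def suslin_bar_def Let_def)+

lemma suslin_dim [simp]:
  "dim_row (suslin m v w) = 2 ^ m" "dim_col (suslin m v w) = 2 ^ m"
  "dim_row (suslin_bar m v w) = 2 ^ m" "dim_col (suslin_bar m v w) = 2 ^ m"
  by (induction m arbitrary: v w) (simp_all add: suslin_0 suslin_Suc)

lemma suslin_carrier [simp]:
  "suslin m v w \<in> carrier_mat (2 ^ m) (2 ^ m)" "suslin_bar m v w \<in> carrier_mat (2 ^ m) (2 ^ m)"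
  by (simp_all add: carrier_matI)

lemma suslin_add:
  "suslin m (\<lambda>k. v k + v' k) (\<lambda>k. w k + w' k) = suslin m v w + suslin m v' w' \<and>
   suslin_bar m (\<lambda>k. v k + v' k) (\<lambda>k. w k + w' k) = suslin_bar m v w + suslin_bar m v' w'"
proof (induction m arbitrary: v w v' w')
  case 0
  show ?case by (simp add: suslin_0) (intro conjI eq_matI; simp)
next
  case (Suc m)
  show ?case
    unfolding suslin_Suc
    by (simp add: Suc.IH
        add_four_block_mat[where ?nr1.0 = "2 ^ m" and ?nc1.0 = "2 ^ m" and ?nr2.0 = "2 ^ m" and ?nc2.0 = "2 ^ m"]
        add_smult_distrib_right_mat[of "1\<^sub>m (2 ^ m)" "2 ^ m" "2 ^ m"] uminus_add_distrib_mat[of _ "2 ^ m" "2 ^ m"])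
qed

lemma sum_atLeast1_Suc_shift:
  "(\<Sum>k = 1..Suc (Suc m). f k) = f 1 + (\<Sum>k = 1..Suc m. f (Suc k))"
  by (induction m) (simp_all add: ac_simps)

lemma suslin_mult_suslin_bar:
  "suslin m v w * suslin_bar m v w = (\<Sum>k = 1..Suc m. v k * w k) \<cdot>\<^sub>m 1\<^sub>m (2 ^ m) \<and>
   suslin_bar m v w * suslin m v w = (\<Sum>k = 1..Suc m. v k * w k) \<cdot>\<^sub>m 1\<^sub>m (2 ^ m)"
proof (induction m arbitrary: v w)
  case 0
  show ?case by (simp add: suslin_0) (intro conjI eq_matI; simp add: scalar_prod_def mult.commute)
next
  case (Suc m)
  let ?T = "suslin m (\<lambda>k. v (Suc k)) (\<lambda>k. w (Suc k))"
    and ?T' = "suslin_bar m (\<lambda>k. v (Suc k)) (\<lambda>k. w (Suc k))"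
    and ?q = "\<Sum>k = 1..Suc m. v (Suc k) * w (Suc k)"
  have IH: "?T * ?T' = ?q \<cdot>\<^sub>m 1\<^sub>m (2 ^ m)" "?T' * ?T = ?q \<cdot>\<^sub>m 1\<^sub>m (2 ^ m)"
    using Suc.IH by simp_all
  have "suslin (Suc m) v w * suslin_bar (Suc m) v w = (v 1 * w 1 + ?q) \<cdot>\<^sub>m 1\<^sub>m (2 ^ m + 2 ^ m)"
    unfolding suslin_Suc by (rule four_block_scalar_mult) (simp_all add: IH)
  moreover have "suslin_bar (Suc m) v w * suslin (Suc m) v w = (w 1 * v 1 + ?q) \<cdot>\<^sub>m 1\<^sub>m (2 ^ m + 2 ^ m)"
    using four_block_scalar_mult[where T = "- ?T" and T' = "- ?T'" and d = "2 ^ m" and q = ?q and a = "w 1"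
        and b = "v 1"] IH
    by (simp add: suslin_Suc)
  ultimately show ?case
    unfolding sum_atLeast1_Suc_shift by (simp add: mult_2 mult.commute)
qed

lemma suslin_bar_eq_uminus:
  assumes "v 1 = 0" and "w 1 = 0"
  shows "suslin_bar (Suc m) v w = - suslin (Suc m) v w"
  using assms by (simp add: suslin_Suc) (intro eq_matI; simp)

lemma suslin_square:
  assumes "v 1 = 0" and "w 1 = 0"
  shows "suslin (Suc m) v w * suslin (Suc m) v w = - ((\<Sum>k = 1..Suc (Suc m). v k * w k) \<cdot>\<^sub>m 1\<^sub>m (2 ^ Suc m))"
  using suslin_mult_suslin_bar[of "Suc m" v w] suslin_bar_eq_uminus[where v = v and w = w and m = m, OF assms]
  by simp (metis uminus_uminus_mat)

lemma suslin_zero: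
  assumes "\<forall>k>0. v k = 0" and "\<forall>k>0. w k = 0"
  shows "suslin m v w = 0\<^sub>m (2 ^ m) (2 ^ m) \<and> suslin_bar m v w = 0\<^sub>m (2 ^ m) (2 ^ m)"
  using assms
proof (induction m arbitrary: v w)
  case 0
  then show ?case by (simp add: suslin_0) (intro conjI eq_matI; simp)
next
  case (Suc m)
  then have "suslin m (\<lambda>k. v (Suc k)) (\<lambda>k. w (Suc k)) = 0\<^sub>m (2 ^ m) (2 ^ m)"
    "suslin_bar m (\<lambda>k. v (Suc k)) (\<lambda>k. w (Suc k)) = 0\<^sub>m (2 ^ m) (2 ^ m)"
    by simp_all
  with Suc.prems show ?case by (simp add: suslin_Suc mult_2)
qed

lemma suslin_diag:
  assumes "\<forall>k>1. v k = 0" and "\<forall>k>1. w k = 0"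
  shows "suslin (Suc m) v w
    = four_block_mat (v 1 \<cdot>\<^sub>m 1\<^sub>m (2 ^ m)) (0\<^sub>m (2 ^ m) (2 ^ m)) (0\<^sub>m (2 ^ m) (2 ^ m)) (w 1 \<cdot>\<^sub>m 1\<^sub>m (2 ^ m))"
  using suslin_zero[of "\<lambda>k. v (Suc k)" "\<lambda>k. w (Suc k)" m] assms by (simp add: suslin_Suc)

lemma suslin_offdiag:
  assumes "v 1 = 0" and "w 1 = 0"
  shows "suslin (Suc m) v w = four_block_mat (0\<^sub>m (2 ^ m) (2 ^ m))
    (suslin m (\<lambda>k. v (Suc k)) (\<lambda>k. w (Suc k))) (- suslin_bar m (\<lambda>k. v (Suc k)) (\<lambda>k. w (Suc k)))
    (0\<^sub>m (2 ^ m) (2 ^ m))"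
  using assms by (simp add: suslin_Suc)

lemma suslin_diag_idem:
  assumes "\<forall>k>1. v k = 0" and "\<forall>k>1. w k = 0" and "v 1 * v 1 = v 1" and "w 1 * w 1 = w 1"
  shows "suslin (Suc m) v w * suslin (Suc m) v w = suslin (Suc m) v w"
  using assms by (simp add: suslin_diag four_block_diag_mult)

lemma suslin_diag_anticommute:
  assumes "\<forall>k>1. u k = 0" and "\<forall>k>1. u' k = 0" and "v 1 = 0" and "w 1 = 0"
  shows "suslin (Suc m) u u' * suslin (Suc m) v w + suslin (Suc m) v w * suslin (Suc m) u u'
    = (u 1 + u' 1) \<cdot>\<^sub>m suslin (Suc m) v w"
  using assms by (simp add: suslin_diag suslin_offdiag four_block_diag_anticommute)

lemma suslin_EF_carrier:
  "X \<in> {suslinE n k, suslinF n k} \<Longrightarrow> X \<in> carrier_mat (2 ^ (n - 1)) (2 ^ (n - 1))"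
  by (auto simp: suslinE_def suslinF_def)

lemma suslin_EF_first_idem:
  assumes "2 \<le> n" and "e \<in> {suslinE n 1, suslinF n 1}"
  shows "e * e = e"
proof -
  obtain m where "n = Suc (Suc m)" using assms(1) by (metis add_2_eq_Suc le_Suc_ex)
  with assms(2) show ?thesis
    by (auto simp: suslinE_def suslinF_def std_basis_def intro: suslin_diag_idem)
qed

lemma suslin_EF_first_odd:
  assumes "2 \<le> n" and "e \<in> {suslinE n 1, suslinF n 1}"
    and "2 \<le> k" and "X \<in> {suslinE n k, suslinF n k}"
  shows "e * X + X * e = X"
proof -
  obtain m where "n = Suc (Suc m)" using assms(1) by (metis add_2_eq_Suc le_Suc_ex)
  with assms(2-4) show ?thesis
    by (auto simp: suslinE_def suslinF_def std_basis_def suslin_diag_anticommute)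
qed

lemma suslin_EF_square_zero:
  assumes "2 \<le> n" and "2 \<le> k" and "X \<in> {suslinE n k, suslinF n k}"
  shows "X * X = 0\<^sub>m (2 ^ (n - 1)) (2 ^ (n - 1))"
proof -
  obtain m where "n = Suc (Suc m)" using assms(1) by (metis add_2_eq_Suc le_Suc_ex)
  with assms(2,3) show ?thesis
    by (auto simp: suslinE_def suslinF_def std_basis_def suslin_square)
qed

(* E_i F_i + F_i E_i = -1, hence the last hypothesis. *)
lemma suslin_EF_anticommute:
  assumes "2 \<le> n" and "2 \<le> i" and "2 \<le> j"
    and X: "X \<in> {suslinE n i, suslinF n i}" and Y: "Y \<in> {suslinE n j, suslinF n j}"
    and "i = j \<Longrightarrow> X = Y"
  shows "X * Y + Y * X = 0\<^sub>m (2 ^ (n - 1)) (2 ^ (n - 1))"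
proof (cases "X = Y")
  case True
  then show ?thesis using assms by (simp add: suslin_EF_square_zero)
next
  case False
  with assms(6) have "i \<noteq> j" by blast
  then have orth: "std_basis i k * std_basis j k = (0::'a)" "std_basis j k * std_basis i k = (0::'a)"
    for k
    by (simp_all add: std_basis_def)
  have first: "std_basis i 1 = (0::'a)" "std_basis j 1 = (0::'a)"
    using assms(2,3) by (simp_all add: std_basis_def)
  obtain m where n: "n = Suc (Suc m)" using assms(1) by (metis add_2_eq_Suc le_Suc_ex)
  show ?thesis
  proof (rule anticommute_of_square_zero_mat)
    show "X * X = 0\<^sub>m (2 ^ (n - 1)) (2 ^ (n - 1))" "Y * Y = 0\<^sub>m (2 ^ (n - 1)) (2 ^ (n - 1))"
      using assms by (simp_all add: suslin_EF_square_zero)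
    show "(X + Y) * (X + Y) = 0\<^sub>m (2 ^ (n - 1)) (2 ^ (n - 1))"
      using X Y first orth unfolding n
      by (auto simp: suslinE_def suslinF_def suslin_add[THEN conjunct1, symmetric] suslin_square)
  qed (use X Y suslin_EF_carrier in auto)
qed

theorem theorem2p3:
  fixes n :: nat and X :: "nat \<Rightarrow> 'a::comm_ring_1 mat" and c :: 'a and i j :: nat
  assumes hX: "\<forall>k\<in>{1..n}. X k = suslinE n k \<or> X k = suslinF n k"
    and hi: "1 < i" "i \<le> n" and hj: "1 < j" "j \<le> n"
  shows "1\<^sub>m (2 ^ (n - 1)) + c \<cdot>\<^sub>m (X i * X j) =
         mat_comm (1\<^sub>m (2 ^ (n - 1)) + c \<cdot>\<^sub>m (X i * X 1))
                  (1\<^sub>m (2 ^ (n - 1)) + X 1 * X j)"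
proof (rule mat_comm_one_plus_odd)
  let ?N = "2 ^ (n - 1)"
  have n: "2 \<le> n" using hi by simp
  have X: "X 1 \<in> {suslinE n 1, suslinF n 1}" "X i \<in> {suslinE n i, suslinF n i}"
    "X j \<in> {suslinE n j, suslinF n j}"
    using hX hi hj by auto
  show "X 1 \<in> carrier_mat ?N ?N" "X i \<in> carrier_mat ?N ?N" "X j \<in> carrier_mat ?N ?N"
    using X by (simp_all only: suslin_EF_carrier)
  show "X 1 * X 1 = X 1" using n X(1) by (rule suslin_EF_first_idem)
  show "X 1 * X i + X i * X 1 = X i"
    using hi(1) by (intro suslin_EF_first_odd[OF n X(1) _ X(2)]) simp
  show "X 1 * X j + X j * X 1 = X j"
    using hj(1) by (intro suslin_EF_first_odd[OF n X(1) _ X(3)]) simp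
  show "X i * X i = 0\<^sub>m ?N ?N"
    using hi(1) by (intro suslin_EF_square_zero[OF n _ X(2)]) simp
  show "X j * X j = 0\<^sub>m ?N ?N"
    using hj(1) by (intro suslin_EF_square_zero[OF n _ X(3)]) simp
  show "X i * X j + X j * X i = 0\<^sub>m ?N ?N"
    using n X hi hj by (intro suslin_EF_anticommute) auto
qed

end
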